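(* Let $K$ be a field, $d\ge 2$, and $p\ge 1$ an integer. Let $h\in K[x_{i_1,\dots,i_d}\mid i_j\in[p]]$ be a polynomial that can be written as $$h = x_{p,\dots,p}\,h' + r',$$ where $h'$ is a polynomial in the variables $x_{i_1,\dots,i_d}$ with all $i_j\in[p-1]$ having weight $(1^{p-1},\dots,1^{p-1})$, and $r'$ is a polynomial of weight $(1^p,\dots,1^p)$ not involving the variable $x_{p,\dots,p}$. Let $n_1,\dots,n_d\ge p$ and $T\in K^{n_1}\otimes\cdots\otimes K^{n_d}$, and let $G=\prod_{i=1}^d\mathrm{Sym}([n_i])$. Suppose that $(\sigma h)(T)=0$ for all $\sigma\in G$, but $(\sigma h')(T)\neq 0$ for some $\sigma\in G$. Then $$\mathrm{prk}(T)\le d(p-1)+\sum_{s=1}^{\lfloor d/2\rfloor}\binom{d}{s}(p-1)^{d-s}.$$ *)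

theory Defs
  imports "HOL-Library.Poly_Mapping" "HOL-Combinatorics.Permutations"
begin

text \<open>Variables x_{i_1,...,i_d} are indexed by lists [i_1,...,i_d] (1-based indices).
  Monomials: nat list \<Rightarrow>0 nat (exponent vectors); polynomials: monomial \<Rightarrow>0 coefficient.\<close>

type_synonym 'a tpoly = "(nat list \<Rightarrow>\<^sub>0 nat) \<Rightarrow>\<^sub>0 'a"

definition tvar :: "nat list \<Rightarrow> 'a::comm_semiring_1 tpoly" where
  "tvar v = Poly_Mapping.single (Poly_Mapping.single v 1) 1"

definition tvars :: "'a::zero tpoly \<Rightarrow> nat list set" where
  "tvars h = \<Union> (Poly_Mapping.keys ` Poly_Mapping.keys h)"

definition in_ring :: "nat \<Rightarrow> nat \<Rightarrow> 'a::zero tpoly \<Rightarrow> bool" where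
  "in_ring d q h \<longleftrightarrow> (\<forall>v\<in>tvars h. length v = d \<and> (\<forall>j<d. v ! j \<in> {1..q}))"

definition mweight :: "(nat list \<Rightarrow>\<^sub>0 nat) \<Rightarrow> nat \<Rightarrow> nat \<Rightarrow> nat" where
  "mweight m j i = (\<Sum>v\<in>{v\<in>Poly_Mapping.keys m. v ! j = i}. Poly_Mapping.lookup m v)"

definition has_weight_ones :: "nat \<Rightarrow> nat \<Rightarrow> 'a::zero tpoly \<Rightarrow> bool" where
  "has_weight_ones d q h \<longleftrightarrow> in_ring d q h \<and>
     (\<forall>m\<in>Poly_Mapping.keys h. \<forall>j<d. \<forall>i\<in>{1..q}. mweight m j i = 1)"

definition act_var :: "(nat \<Rightarrow> nat \<Rightarrow> nat) \<Rightarrow> nat list \<Rightarrow> nat list" where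
  "act_var \<sigma> v = map (\<lambda>j. \<sigma> j (v ! j)) [0..<length v]"

definition act_mono :: "(nat \<Rightarrow> nat \<Rightarrow> nat) \<Rightarrow> (nat list \<Rightarrow>\<^sub>0 nat) \<Rightarrow> (nat list \<Rightarrow>\<^sub>0 nat)" where
  "act_mono \<sigma> m = (\<Sum>v\<in>Poly_Mapping.keys m. Poly_Mapping.single (act_var \<sigma> v) (Poly_Mapping.lookup m v))"

definition act_poly :: "(nat \<Rightarrow> nat \<Rightarrow> nat) \<Rightarrow> 'a::comm_semiring_1 tpoly \<Rightarrow> 'a tpoly" where
  "act_poly \<sigma> h = (\<Sum>m\<in>Poly_Mapping.keys h. Poly_Mapping.single (act_mono \<sigma> m) (Poly_Mapping.lookup h m))"

definition peval :: "'a::comm_semiring_1 tpoly \<Rightarrow> (nat list \<Rightarrow> 'a) \<Rightarrow> 'a" where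
  "peval h T = (\<Sum>m\<in>Poly_Mapping.keys h. Poly_Mapping.lookup h m * (\<Prod>v\<in>Poly_Mapping.keys m. T v ^ Poly_Mapping.lookup m v))"

definition box :: "nat \<Rightarrow> (nat \<Rightarrow> nat) \<Rightarrow> nat list set" where
  "box d n = {i. length i = d \<and> (\<forall>j<d. i ! j \<in> {1..n j})}"

definition prk_decomp :: "nat \<Rightarrow> (nat \<Rightarrow> nat) \<Rightarrow> ('a::comm_semiring_1) itself \<Rightarrow> (nat list \<Rightarrow> 'a) \<Rightarrow> nat \<Rightarrow> bool" where
  "prk_decomp d n _ T r \<longleftrightarrow>
     (\<exists>S :: nat \<Rightarrow> nat set. \<exists>A B :: nat \<Rightarrow> nat list \<Rightarrow> 'a.
        (\<forall>k<r. S k \<noteq> {} \<and> S k \<subset> {0..<d}) \<and>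
        (\<forall>i\<in>box d n. T i = (\<Sum>k<r. A k (nths i (S k)) * B k (nths i ({0..<d} - S k)))))"

definition prk :: "nat \<Rightarrow> (nat \<Rightarrow> nat) \<Rightarrow> (nat list \<Rightarrow> 'a::comm_semiring_1) \<Rightarrow> nat" where
  "prk d n T = (LEAST r. prk_decomp d n TYPE('a) T r)"

end

theory Submission
  imports Defs
begin

text \<open>
  Fix \<open>\<sigma>0\<close> with \<open>(\<sigma>0 h')(T) \<noteq> 0\<close> and call the
  \<open>j\<close>-th coordinate of an index \<open>i\<close> special if \<open>i ! j \<in>
  \<sigma>0 j ` {1..<p}\<close>. The entries of \<open>T\<close> with a special coordinate form at
  most \<open>d (p - 1)\<close> tensors of partition rank one: attribute each such entry to its
  first special coordinate \<open>j\<close> and to the value of \<open>i ! j\<close>.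

  If no coordinate of \<open>i\<close> is special, composing each \<open>\<sigma>0 j\<close> with
  the transposition of \<open>\<sigma>0 j p\<close> and \<open>i ! j\<close> gives a
  \<open>\<sigma>\<close> that sends the index \<open>replicate d p\<close> to \<open>i\<close> and
  agrees with \<open>\<sigma>0\<close> on the variables of \<open>h'\<close>. So \<open>(\<sigma>
  h)(T) = 0\<close> expresses \<open>T i\<close> as \<open>-1 / (\<sigma>0 h')(T)\<close> times the
  value of \<open>r'\<close> in which every index \<open>p\<close> in direction \<open>j\<close> is
  replaced by \<open>i ! j\<close> and every other index is moved by \<open>\<sigma>0\<close>. As
  \<open>r'\<close> has weight \<open>(1\<^sup>p,\<dots>,1\<^sup>p)\<close>, each of its monomials
  contains, for every direction \<open>j\<close>, exactly one variable whose \<open>j\<close>-th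
  index is \<open>p\<close>, and with exponent one. Choosing in each monomial such a variable with
  between \<open>1\<close> and \<open>d div 2\<close> indices equal to \<open>p\<close> splits the
  monomial into a factor that only sees the coordinates of \<open>i\<close> at those positions and a
  factor that only sees the others. Counting the possible chosen variables gives the second summand
  of the bound.
\<close>

definition mono_eval :: "(nat list \<Rightarrow>\<^sub>0 nat) \<Rightarrow> (nat list \<Rightarrow> 'a::comm_semiring_1) \<Rightarrow> 'a" where
  "mono_eval m f = (\<Prod>v\<in>Poly_Mapping.keys m. f v ^ Poly_Mapping.lookup m v)"

lemma mono_eval_superset:
  assumes "finite S" "Poly_Mapping.keys m \<subseteq> S"
  shows "mono_eval m f = (\<Prod>v\<in>S. f v ^ Poly_Mapping.lookup m v)"
  unfolding mono_eval_def
  by (rule prod.mono_neutral_left) (use assms in \<open>auto simp: in_keys_iff\<close>)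

lemma mono_eval_add: "mono_eval (a + b) f = mono_eval a f * mono_eval b f"
proof -
  let ?S = "Poly_Mapping.keys a \<union> Poly_Mapping.keys b"
  have "mono_eval (a + b) f = (\<Prod>v\<in>?S. f v ^ Poly_Mapping.lookup (a + b) v)"
    by (rule mono_eval_superset) (auto simp: Poly_Mapping.keys_add)
  also have "\<dots> = (\<Prod>v\<in>?S. f v ^ Poly_Mapping.lookup a v) * (\<Prod>v\<in>?S. f v ^ Poly_Mapping.lookup b v)"
    by (simp add: lookup_add power_add prod.distrib)
  also have "\<dots> = mono_eval a f * mono_eval b f"
    by (simp add: mono_eval_superset[symmetric])
  finally show ?thesis .
qed

lemma mono_eval_single [simp]: "mono_eval (Poly_Mapping.single v k) f = f v ^ k"
  by (cases "k = 0") (auto simp: mono_eval_def)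

lemma mono_eval_zero [simp]: "mono_eval 0 f = 1"
  by (simp add: mono_eval_def)

lemma mono_eval_sum: "mono_eval (sum g A) f = (\<Prod>x\<in>A. mono_eval (g x) f)"
  by (induction A rule: infinite_finite_induct) (simp_all add: mono_eval_add)

lemma peval_eq_sum_mono_eval:
  assumes "finite S" "Poly_Mapping.keys h \<subseteq> S"
  shows "peval h f = (\<Sum>m\<in>S. Poly_Mapping.lookup h m * mono_eval m f)"
  unfolding peval_def mono_eval_def[symmetric]
  by (rule sum.mono_neutral_left) (use assms in \<open>auto simp: in_keys_iff\<close>)

lemma peval_add: "peval (a + b) f = peval a f + peval b f"
proof -
  let ?S = "Poly_Mapping.keys a \<union> Poly_Mapping.keys b"
  have "peval (a + b) f = (\<Sum>m\<in>?S. Poly_Mapping.lookup (a + b) m * mono_eval m f)"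
    by (rule peval_eq_sum_mono_eval) (auto simp: Poly_Mapping.keys_add)
  also have "\<dots> = (\<Sum>m\<in>?S. Poly_Mapping.lookup a m * mono_eval m f)
      + (\<Sum>m\<in>?S. Poly_Mapping.lookup b m * mono_eval m f)"
    by (simp add: lookup_add distrib_right sum.distrib)
  also have "\<dots> = peval a f + peval b f"
    by (simp add: peval_eq_sum_mono_eval[symmetric])
  finally show ?thesis .
qed

lemma peval_single [simp]: "peval (Poly_Mapping.single m c) f = c * mono_eval m f"
  by (cases "c = 0") (auto simp: peval_def mono_eval_def)

lemma peval_zero [simp]: "peval 0 f = 0"
  by (simp add: peval_def)

lemma peval_sum: "peval (sum g A) f = (\<Sum>x\<in>A. peval (g x) f)"
  by (induction A rule: infinite_finite_induct) (simp_all add: peval_add)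

lemma poly_mapping_sum_single_lookup:
  "(\<Sum>m\<in>Poly_Mapping.keys h. Poly_Mapping.single m (Poly_Mapping.lookup h m)) = h"
  by (rule poly_mapping_eqI) (simp add: lookup_sum lookup_single when_def in_keys_iff)

lemma peval_act_poly: "peval (act_poly \<sigma> h) T = peval h (\<lambda>v. T (act_var \<sigma> v))"
  unfolding act_poly_def act_mono_def peval_sum peval_single mono_eval_sum mono_eval_single
  by (simp add: peval_def mult_ac)

lemma peval_tvar_mult: "peval (tvar v * h) f = f v * peval h f"
proof -
  have "tvar v * h = (\<Sum>m\<in>Poly_Mapping.keys h.
      Poly_Mapping.single (Poly_Mapping.single v 1 + m) (Poly_Mapping.lookup h m))"
    by (subst poly_mapping_sum_single_lookup[of h, symmetric])
      (simp add: sum_distrib_left tvar_def mult_single)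
  then have "peval (tvar v * h) f = (\<Sum>m\<in>Poly_Mapping.keys h.
      Poly_Mapping.lookup h m * mono_eval (Poly_Mapping.single v 1 + m) f)"
    by (simp only: peval_sum peval_single)
  then show ?thesis
    by (simp add: mono_eval_add sum_distrib_left mult_ac
        peval_eq_sum_mono_eval[OF finite_keys subset_refl])
qed

lemma peval_cong:
  assumes "\<And>v. v \<in> tvars h \<Longrightarrow> f v = g v"
  shows "peval h f = peval h g"
  unfolding peval_def
proof (intro sum.cong refl arg_cong2[where f="(*)"] prod.cong arg_cong2[where f=power])
qed (use assms in \<open>auto simp: tvars_def\<close>)

lemma in_ring_tvarsD:
  assumes "in_ring d q h" "v \<in> tvars h"
  shows "length v = d \<and> set v \<subseteq> {1..q}"
proof -
  have "length v = d" "\<forall>j<d. v ! j \<in> {1..q}" using assms by (auto simp: in_ring_def)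
  then show ?thesis by (auto simp: in_set_conv_nth)
qed

section \<open>Partition-rank decompositions\<close>

definition depends_only_on :: "nat \<Rightarrow> nat set \<Rightarrow> (nat list \<Rightarrow> 'a) \<Rightarrow> bool" where
  "depends_only_on d S F \<longleftrightarrow>
     (\<forall>i i'. length i = d \<longrightarrow> length i' = d \<longrightarrow> (\<forall>j\<in>S. j < d \<longrightarrow> i ! j = i' ! j) \<longrightarrow> F i = F i')"

lemma nth_eq_if_nths_eq:
  assumes "length xs = length ys" "nths xs S = nths ys S" "j \<in> S" "j < length xs"
  shows "xs ! j = ys ! j"
  using assms
proof (induction xs arbitrary: ys S j)
  case Nil
  then show ?case by simp
next
  case (Cons x xs)
  then obtain y ys' where ys: "ys = y # ys'" by (cases ys) auto
  show ?case
  proof (cases j)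
    case 0
    with Cons.prems ys show ?thesis by (simp add: nths_Cons)
  next
    case (Suc j')
    have "nths xs {j. Suc j \<in> S} = nths ys' {j. Suc j \<in> S}"
      using Cons.prems ys by (auto simp: nths_Cons split: if_splits)
    with Cons.IH[of ys' "{j. Suc j \<in> S}" j'] Cons.prems ys Suc show ?thesis by simp
  qed
qed

lemma depends_only_on_factors_through_nths:
  assumes "depends_only_on d S F"
  shows "\<exists>A. \<forall>i. length i = d \<longrightarrow> A (nths i S) = F i"
proof -
  define A where "A ys = F (SOME i. length i = d \<and> nths i S = ys)" for ys
  have "A (nths i S) = F i" if i: "length i = d" for i
  proof -
    define i' where "i' = (SOME i'. length i' = d \<and> nths i' S = nths i S)"
    have "length i' = d \<and> nths i' S = nths i S"
      unfolding i'_def by (rule someI_ex) (use i in blast)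
    then have "F i' = F i"
      using assms i nth_eq_if_nths_eq[of i' i S] unfolding depends_only_on_def by metis
    then show ?thesis unfolding A_def i'_def by simp
  qed
  then show ?thesis by blast
qed

lemma prk_decomp_sum:
  fixes T :: "nat list \<Rightarrow> 'a::comm_semiring_1"
  assumes "finite I"
    and "\<And>x. x \<in> I \<Longrightarrow> S x \<noteq> {} \<and> S x \<subset> {0..<d}"
    and "\<And>x. x \<in> I \<Longrightarrow> depends_only_on d (S x) (A x)"
    and "\<And>x. x \<in> I \<Longrightarrow> depends_only_on d ({0..<d} - S x) (B x)"
    and "\<And>i. i \<in> box d n \<Longrightarrow> T i = (\<Sum>x\<in>I. A x i * B x i)"
  shows "prk_decomp d n TYPE('a) T (card I)"
proof -
  have "\<forall>x\<in>I. \<exists>A'. \<forall>i. length i = d \<longrightarrow> A' (nths i (S x)) = A x i"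
    using assms(3) depends_only_on_factors_through_nths by blast
  then obtain A' where A': "\<And>x i. x \<in> I \<Longrightarrow> length i = d \<Longrightarrow> A' x (nths i (S x)) = A x i"
    by metis
  have "\<forall>x\<in>I. \<exists>B'. \<forall>i. length i = d \<longrightarrow> B' (nths i ({0..<d} - S x)) = B x i"
    using assms(4) depends_only_on_factors_through_nths by blast
  then obtain B' where B': "\<And>x i. x \<in> I \<Longrightarrow> length i = d \<Longrightarrow> B' x (nths i ({0..<d} - S x)) = B x i"
    by metis
  obtain g where g: "bij_betw g {..<card I} I"
    using ex_bij_betw_nat_finite[OF assms(1)] atLeast0LessThan by auto
  show ?thesis unfolding prk_decomp_def
  proof (intro exI conjI allI impI ballI)
    fix k assume "k < card I"
    then show "(S \<circ> g) k \<noteq> {}" "(S \<circ> g) k \<subset> {0..<d}"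
      using assms(2) bij_betwE[OF g] by auto
  next
    fix i assume i: "i \<in> box d n"
    then have "T i = (\<Sum>x\<in>I. A' x (nths i (S x)) * B' x (nths i ({0..<d} - S x)))"
      using assms(5) A' B' by (simp add: box_def)
    also have "\<dots> = (\<Sum>k<card I. A' (g k) (nths i (S (g k))) * B' (g k) (nths i ({0..<d} - S (g k))))"
      by (rule sum.reindex_bij_betw[OF g, symmetric])
    finally show "T i = (\<Sum>k<card I. (A' \<circ> g) k (nths i ((S \<circ> g) k))
        * (B' \<circ> g) k (nths i ({0..<d} - (S \<circ> g) k)))" by simp
  qed
qed

lemma sum_lessThan_add:
  "(\<Sum>k<a + (b::nat). f k :: 'a::comm_monoid_add) = (\<Sum>k<a. f k) + (\<Sum>k<b. f (a + k))"
  by (induction b) (simp_all add: add.assoc)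

lemma prk_decomp_add:
  assumes "prk_decomp d n TYPE('a::comm_semiring_1) T1 r1" "prk_decomp d n TYPE('a) T2 r2"
  shows "prk_decomp d n TYPE('a) (\<lambda>i. T1 i + T2 i) (r1 + r2)"
proof -
  from assms(1) obtain S1 and A1 B1 :: "nat \<Rightarrow> nat list \<Rightarrow> 'a" where
    1: "\<forall>k<r1. S1 k \<noteq> {} \<and> S1 k \<subset> {0..<d}"
       "\<forall>i\<in>box d n. T1 i = (\<Sum>k<r1. A1 k (nths i (S1 k)) * B1 k (nths i ({0..<d} - S1 k)))"
    unfolding prk_decomp_def by blast
  from assms(2) obtain S2 and A2 B2 :: "nat \<Rightarrow> nat list \<Rightarrow> 'a" where
    2: "\<forall>k<r2. S2 k \<noteq> {} \<and> S2 k \<subset> {0..<d}"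
       "\<forall>i\<in>box d n. T2 i = (\<Sum>k<r2. A2 k (nths i (S2 k)) * B2 k (nths i ({0..<d} - S2 k)))"
    unfolding prk_decomp_def by blast
  define S where "S k = (if k < r1 then S1 k else S2 (k - r1))" for k
  define A where "A k = (if k < r1 then A1 k else A2 (k - r1))" for k
  define B where "B k = (if k < r1 then B1 k else B2 (k - r1))" for k
  show ?thesis unfolding prk_decomp_def
  proof (intro exI conjI allI impI ballI)
    fix k assume "k < r1 + r2"
    then show "S k \<noteq> {}" "S k \<subset> {0..<d}" using 1(1) 2(1) by (auto simp: S_def)
  next
    fix i assume i: "i \<in> box d n"
    have "(\<Sum>k<r1. A k (nths i (S k)) * B k (nths i ({0..<d} - S k))) = T1 i"
      using 1(2) i by (simp add: S_def A_def B_def)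
    moreover have "(\<Sum>k<r2. A (r1 + k) (nths i (S (r1 + k)))
        * B (r1 + k) (nths i ({0..<d} - S (r1 + k)))) = T2 i"
      using 2(2) i by (simp add: S_def A_def B_def)
    ultimately show "T1 i + T2 i = (\<Sum>k<r1 + r2. A k (nths i (S k)) * B k (nths i ({0..<d} - S k)))"
      by (simp add: sum_lessThan_add)
  qed
qed

lemma prk_decomp_restricted_sum:
  fixes T :: "nat list \<Rightarrow> 'a::comm_semiring_1"
  assumes "finite I"
    and S: "\<And>x. x \<in> I \<Longrightarrow> S x \<noteq> {} \<and> S x \<subset> {0..<d}"
    and A: "\<And>x. x \<in> I \<Longrightarrow> depends_only_on d (S x) (A x)"
    and B: "\<And>x. x \<in> I \<Longrightarrow> depends_only_on d ({0..<d} - S x) (B x)"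
    and T: "\<And>i. i \<in> box d n \<Longrightarrow> \<forall>j<d. P j (i ! j) \<Longrightarrow> T i = (\<Sum>x\<in>I. A x i * B x i)"
  shows "prk_decomp d n TYPE('a) (\<lambda>i. if \<forall>j<d. P j (i ! j) then T i else 0) (card I)"
proof (rule prk_decomp_sum[OF \<open>finite I\<close> S])
  fix x assume "x \<in> I"
  with A show "depends_only_on d (S x) (\<lambda>i. if \<forall>j\<in>S x. P j (i ! j) then A x i else 0)"
    using S[OF \<open>x \<in> I\<close>] unfolding depends_only_on_def by (smt (verit) psubsetD atLeastLessThan_iff)
next
  fix x assume "x \<in> I"
  with B show "depends_only_on d ({0..<d} - S x)
      (\<lambda>i. if \<forall>j\<in>{0..<d} - S x. P j (i ! j) then B x i else 0)"
    unfolding depends_only_on_def by (smt (verit) DiffD1 atLeastLessThan_iff)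
next
  fix i assume i: "i \<in> box d n"
  show "(if \<forall>j<d. P j (i ! j) then T i else 0) = (\<Sum>x\<in>I.
      (if \<forall>j\<in>S x. P j (i ! j) then A x i else 0) *
      (if \<forall>j\<in>{0..<d} - S x. P j (i ! j) then B x i else 0))"
  proof (cases "\<forall>j<d. P j (i ! j)")
    case True
    moreover have "\<forall>j\<in>S x. P j (i ! j)" "\<forall>j\<in>{0..<d} - S x. P j (i ! j)" if "x \<in> I" for x
      using True S[OF that] by auto
    ultimately show ?thesis using T[OF i] by (auto intro!: sum.cong)
  next
    case False
    then obtain j where "j < d" "\<not> P j (i ! j)" by blast
    then have "(if \<forall>j\<in>S x. P j (i ! j) then A x i else 0) *
        (if \<forall>j\<in>{0..<d} - S x. P j (i ! j) then B x i else 0) = 0" for x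
      by (cases "j \<in> S x") auto
    then show ?thesis using False by auto
  qed
qed

lemma sum_first_witness:
  "(\<Sum>j<(d::nat). if P j \<and> (\<forall>j'<j. \<not> P j') then x else 0) = (if \<exists>j<d. P j then x else (0::'a::comm_monoid_add))"
  by (induction d) (auto simp: less_Suc_eq)

lemma prk_decomp_special_slices:
  fixes T :: "nat list \<Rightarrow> 'a::comm_semiring_1"
  assumes "2 \<le> d" and "\<And>j. j < d \<Longrightarrow> finite (E j)"
  shows "prk_decomp d n TYPE('a) (\<lambda>i. if \<exists>j<d. i ! j \<in> E j then T i else 0) (\<Sum>j<d. card (E j))"
proof -
  define A where "A x i = (if i ! fst x = snd x then 1 else 0 :: 'a)" for x :: "nat \<times> nat" and i :: "nat list"
  define B where "B x i = (if \<forall>j<fst x. i ! j \<notin> E j then T (i[fst x := snd x]) else 0)"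
    for x :: "nat \<times> nat" and i
  have "prk_decomp d n TYPE('a) (\<lambda>i. if \<exists>j<d. i ! j \<in> E j then T i else 0) (card (SIGMA j:{..<d}. E j))"
  proof (rule prk_decomp_sum[where S="\<lambda>x. {fst x}"])
    show "finite (SIGMA j:{..<d}. E j)" using assms(2) by auto
  next
    fix x assume "x \<in> (SIGMA j:{..<d}. E j)"
    then have "fst x \<in> {0..<d}" "(if fst x = 0 then 1 else 0) \<in> {0..<d} - {fst x}"
      using assms(1) by auto
    then show "{fst x} \<noteq> {} \<and> {fst x} \<subset> {0..<d}" by blast
  next
    fix x assume "x \<in> (SIGMA j:{..<d}. E j)"
    then show "depends_only_on d {fst x} (A x)" unfolding depends_only_on_def A_def by auto
  next
    fix x assume x: "x \<in> (SIGMA j:{..<d}. E j)"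
    show "depends_only_on d ({0..<d} - {fst x}) (B x)" unfolding depends_only_on_def
    proof (intro allI impI)
      fix i i' :: "nat list"
      assume "length i = d" "length i' = d" "\<forall>j\<in>{0..<d} - {fst x}. j < d \<longrightarrow> i ! j = i' ! j"
      then have "i[fst x := snd x] = i'[fst x := snd x]" "\<forall>j<fst x. i ! j = i' ! j"
        using x by (auto intro!: nth_equalityI simp: nth_list_update)
      then show "B x i = B x i'" by (auto simp: B_def)
    qed
  next
    fix i assume i: "i \<in> box d n"
    have first: "(\<Sum>a\<in>E j. A (j, a) i * B (j, a) i)
        = (if i ! j \<in> E j \<and> (\<forall>j'<j. i ! j' \<notin> E j') then T i else 0)" if "j < d" for j
      using assms(2)[OF that] by (simp add: A_def B_def if_distrib[of "\<lambda>c. c * _"] sum.delta' cong: if_cong) blast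
    have "(\<Sum>x\<in>(SIGMA j:{..<d}. E j). A x i * B x i) = (\<Sum>j<d. \<Sum>a\<in>E j. A (j, a) i * B (j, a) i)"
      using assms(2) by (simp add: sum.Sigma)
    also have "\<dots> = (\<Sum>j<d. if i ! j \<in> E j \<and> (\<forall>j'<j. i ! j' \<notin> E j') then T i else 0)"
      using first by simp
    also have "\<dots> = (if \<exists>j<d. i ! j \<in> E j then T i else 0)"
      by (rule sum_first_witness)
    finally show "(if \<exists>j<d. i ! j \<in> E j then T i else 0) = (\<Sum>x\<in>(SIGMA j:{..<d}. E j). A x i * B x i)" ..
  qed
  then show ?thesis using assms(2) by (simp add: card_SigmaI)
qed

section \<open>Counting words by the number of occurrences of a letter\<close>

definition positions :: "'b \<Rightarrow> 'b list \<Rightarrow> nat set" where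
  "positions a xs = {j. j < length xs \<and> xs ! j = a}"

lemma finite_positions: "finite (positions a xs)"
  by (simp add: positions_def)

lemma positions_subset: "positions a xs \<subseteq> {..<length xs}"
  by (auto simp: positions_def)

definition words_with_count :: "'b set \<Rightarrow> 'b \<Rightarrow> nat \<Rightarrow> nat \<Rightarrow> 'b list set" where
  "words_with_count A a d s =
     {xs. length xs = d \<and> set xs \<subseteq> insert a A \<and> length (filter (\<lambda>x. x = a) xs) = s}"

lemma finite_words_with_count: "finite A \<Longrightarrow> finite (words_with_count A a d s)"
  by (rule finite_subset[OF _ finite_lists_length_eq[of "insert a A" d]])
    (auto simp: words_with_count_def)

lemma Cons_in_words_with_count:
  "a \<notin> A \<Longrightarrow> b # ys \<in> words_with_count A a (Suc d) s \<longleftrightarrow>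
     (b = a \<and> 1 \<le> s \<and> ys \<in> words_with_count A a d (s - 1)) \<or> (b \<in> A \<and> ys \<in> words_with_count A a d s)"
  unfolding words_with_count_def by auto

lemma words_with_count_Suc_0:
  assumes "a \<notin> A"
  shows "words_with_count A a (Suc d) 0 = (\<lambda>(b, xs). b # xs) ` (A \<times> words_with_count A a d 0)"
proof (intro set_eqI iffI)
  fix xs assume "xs \<in> words_with_count A a (Suc d) 0"
  with assms show "xs \<in> (\<lambda>(b, xs). b # xs) ` (A \<times> words_with_count A a d 0)"
    by (cases xs) (auto simp: Cons_in_words_with_count, auto simp: words_with_count_def)
qed (use assms in \<open>auto simp: Cons_in_words_with_count\<close>)

lemma words_with_count_Suc_Suc:
  assumes "a \<notin> A"
  shows "words_with_count A a (Suc d) (Suc s) =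
    (\<lambda>xs. a # xs) ` words_with_count A a d s \<union> (\<lambda>(b, xs). b # xs) ` (A \<times> words_with_count A a d (Suc s))"
proof (intro set_eqI iffI)
  fix xs assume "xs \<in> words_with_count A a (Suc d) (Suc s)"
  with assms show "xs \<in> (\<lambda>xs. a # xs) ` words_with_count A a d s
      \<union> (\<lambda>(b, xs). b # xs) ` (A \<times> words_with_count A a d (Suc s))"
    by (cases xs) (auto simp: Cons_in_words_with_count, auto simp: words_with_count_def)
qed (use assms in \<open>auto simp: Cons_in_words_with_count\<close>)

lemma card_words_with_count:
  assumes "a \<notin> A" "finite A"
  shows "card (words_with_count A a d s) = (d choose s) * card A ^ (d - s)"
proof (induction d arbitrary: s)
  case 0
  have "words_with_count A a 0 s = (if s = 0 then {[]} else {})"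
    by (auto simp: words_with_count_def)
  then show ?case by simp
next
  case (Suc d)
  have inj_Cons: "inj_on (\<lambda>(b, xs). b # xs) X" for X :: "('b \<times> 'b list) set"
    by (auto simp: inj_on_def)
  show ?case
  proof (cases s)
    case 0
    then show ?thesis using assms Suc.IH[of 0]
      by (simp add: words_with_count_Suc_0 card_image[OF inj_Cons] card_cartesian_product)
  next
    case (Suc t)
    have "(\<lambda>xs. a # xs) ` words_with_count A a d t
        \<inter> (\<lambda>(b, xs). b # xs) ` (A \<times> words_with_count A a d (Suc t)) = {}"
      using assms by auto
    then have "card (words_with_count A a (Suc d) s)
        = card (words_with_count A a d t) + card A * card (words_with_count A a d (Suc t))"
      using assms Suc
      by (simp add: words_with_count_Suc_Suc card_Un_disjoint finite_words_with_count
          card_image[OF inj_Cons] card_image card_cartesian_product)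
    also have "\<dots> = (d choose t) * card A ^ (d - t) + card A * ((d choose Suc t) * card A ^ (d - Suc t))"
      using Suc.IH by simp
    also have "\<dots> = (Suc d choose s) * card A ^ (Suc d - s)"
    proof (cases "t < d")
      case True
      then have "card A * card A ^ (d - Suc t) = card A ^ (d - t)"
        by (metis Suc_diff_Suc power_Suc)
      then show ?thesis using Suc by (simp add: algebra_simps)
    qed (use Suc in simp)
    finally show ?thesis .
  qed
qed

lemma card_le_sum_words_with_count:
  assumes "1 \<le> p"
    and "\<And>u. u \<in> V \<Longrightarrow> length u = d \<and> set u \<subseteq> {1..p} \<and> card (positions p u) \<in> {1..k}"
  shows "card V \<le> (\<Sum>s=1..k. (d choose s) * (p - 1) ^ (d - s))"
proof -
  have "V \<subseteq> (\<Union>s\<in>{1..k}. words_with_count {1..p - 1} p d s)"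
  proof
    fix u assume "u \<in> V"
    moreover have "{1..p} = insert p {1..p - 1}" using assms(1) by auto
    ultimately show "u \<in> (\<Union>s\<in>{1..k}. words_with_count {1..p - 1} p d s)"
      using assms(2) by (auto simp: words_with_count_def positions_def length_filter_conv_card)
  qed
  then have "card V \<le> card (\<Union>s\<in>{1..k}. words_with_count {1..p - 1} p d s)"
    by (intro card_mono) (auto intro: finite_words_with_count)
  also have "\<dots> \<le> (\<Sum>s=1..k. card (words_with_count {1..p - 1} p d s))"
    by (rule card_UN_le) simp
  also have "\<dots> = (\<Sum>s=1..k. (d choose s) * (p - 1) ^ (d - s))"
    using assms(1) by (simp add: card_words_with_count)
  finally show ?thesis .
qed

section \<open>Monomials of weight one\<close>

lemma mweight_eq_1_unique:
  assumes "mweight m j a = 1"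
  shows "\<exists>v\<in>Poly_Mapping.keys m. v ! j = a \<and> Poly_Mapping.lookup m v = 1
           \<and> (\<forall>w\<in>Poly_Mapping.keys m. w ! j = a \<longrightarrow> w = v)"
proof -
  have "sum (Poly_Mapping.lookup m) {v\<in>Poly_Mapping.keys m. v ! j = a} = Suc 0"
    using assms by (simp add: mweight_def)
  then obtain v where v: "v \<in> Poly_Mapping.keys m" "v ! j = a" "Poly_Mapping.lookup m v = 1"
    and others: "\<forall>w\<in>{v\<in>Poly_Mapping.keys m. v ! j = a}. v \<noteq> w \<longrightarrow> Poly_Mapping.lookup m w = 0"
    by (auto simp: sum_eq_Suc0_iff)
  have "w = v" if "w \<in> Poly_Mapping.keys m" "w ! j = a" for w
    using others that v(3) by (metis (mono_tags, lifting) in_keys_iff mem_Collect_eq)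
  with v show ?thesis by blast
qed

lemma positions_disjoint_if_mweight_eq_1:
  assumes "\<forall>j<d. mweight m j a = 1" "v \<in> Poly_Mapping.keys m" "w \<in> Poly_Mapping.keys m" "v \<noteq> w"
    and "length v = d"
  shows "positions a v \<inter> positions a w = {}"
proof -
  have False if "j \<in> positions a v" "j \<in> positions a w" for j
  proof -
    have "j < d" "v ! j = a" "w ! j = a" using that assms(5) by (auto simp: positions_def)
    then show False using mweight_eq_1_unique[of m j a] assms(1-4) by metis
  qed
  then show ?thesis by blast
qed

lemma mweight_eq_1_few_positions:
  assumes "0 < d" "\<forall>j<d. mweight m j a = 1"
    and "\<forall>v\<in>Poly_Mapping.keys m. length v = d" "replicate d a \<notin> Poly_Mapping.keys m"
  shows "\<exists>u\<in>Poly_Mapping.keys m. Poly_Mapping.lookup m u = 1 \<and> card (positions a u) \<in> {1..d div 2}"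
proof -
  have nonempty: "1 \<le> card (positions a v)" if "v \<in> Poly_Mapping.keys m" "j < d" "v ! j = a" for v j
  proof -
    have "j \<in> positions a v" using that assms(3) by (auto simp: positions_def)
    then show ?thesis using finite_positions[of a v] by (auto simp: Suc_le_eq card_gt_0_iff)
  qed
  obtain v0 where v0: "v0 \<in> Poly_Mapping.keys m" "v0 ! 0 = a" "Poly_Mapping.lookup m v0 = 1"
    using mweight_eq_1_unique assms(1,2) by blast
  show ?thesis
  proof (cases "card (positions a v0) \<le> d div 2")
    case True
    then show ?thesis using v0 nonempty[OF v0(1) assms(1)] by auto
  next
    case False
    have "\<exists>j<d. v0 ! j \<noteq> a"
    proof (rule ccontr)
      assume "\<not> ?thesis"
      then have "v0 = replicate d a" using assms(3) v0(1) by (auto intro: nth_equalityI)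
      then show False using assms(4) v0(1) by simp
    qed
    then obtain j where j: "j < d" "v0 ! j \<noteq> a" by blast
    obtain v1 where v1: "v1 \<in> Poly_Mapping.keys m" "v1 ! j = a" "Poly_Mapping.lookup m v1 = 1"
      using mweight_eq_1_unique assms(2) j(1) by blast
    have "positions a v0 \<inter> positions a v1 = {}"
      using positions_disjoint_if_mweight_eq_1[OF assms(2) v0(1) v1(1)] j v1(2) assms(3) v0(1) by auto
    then have "card (positions a v0) + card (positions a v1) = card (positions a v0 \<union> positions a v1)"
      by (simp add: card_Un_disjoint finite_positions)
    also have "\<dots> \<le> card {..<d}"
      using positions_subset[of a v0] positions_subset[of a v1] assms(3) v0(1) v1(1)
      by (intro card_mono) auto
    finally show ?thesis using False v1 nonempty[OF v1(1) j(1) v1(2)] by auto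
  qed
qed

lemma has_weight_ones_keysD:
  assumes "has_weight_ones d p r" "1 \<le> p" "m \<in> Poly_Mapping.keys r"
  shows "\<forall>v\<in>Poly_Mapping.keys m. length v = d \<and> set v \<subseteq> {1..p}"
    and "\<forall>j<d. mweight m j p = 1"
proof -
  have ring: "in_ring d p r"
    and weight: "\<forall>m\<in>Poly_Mapping.keys r. \<forall>j<d. \<forall>i\<in>{1..p}. mweight m j i = 1"
    using assms(1) unfolding has_weight_ones_def by simp_all
  have "v \<in> tvars r" if "v \<in> Poly_Mapping.keys m" for v
    using assms(3) that unfolding tvars_def by blast
  then show "\<forall>v\<in>Poly_Mapping.keys m. length v = d \<and> set v \<subseteq> {1..p}"
    using in_ring_tvarsD[OF ring] by simp
  show "\<forall>j<d. mweight m j p = 1"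
    using weight assms(2,3) by simp
qed

lemma has_weight_ones_choose_variables:
  assumes "0 < d" "1 \<le> p" "has_weight_ones d p r" "replicate d p \<notin> tvars r"
  obtains u where "\<And>m. m \<in> Poly_Mapping.keys r \<Longrightarrow> u m \<in> Poly_Mapping.keys m
    \<and> Poly_Mapping.lookup m (u m) = 1 \<and> card (positions p (u m)) \<in> {1..d div 2}"
proof -
  have "\<exists>w\<in>Poly_Mapping.keys m. Poly_Mapping.lookup m w = 1 \<and> card (positions p w) \<in> {1..d div 2}"
    if m: "m \<in> Poly_Mapping.keys r" for m
  proof (rule mweight_eq_1_few_positions[OF assms(1)])
    show "replicate d p \<notin> Poly_Mapping.keys m" using assms(4) m by (auto simp: tvars_def)
    show "\<forall>j<d. mweight m j p = 1" "\<forall>v\<in>Poly_Mapping.keys m. length v = d"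
      using has_weight_ones_keysD[OF assms(3,2) m] by simp_all
  qed
  then show ?thesis using that by metis
qed

definition cofactor :: "'a::comm_semiring_1 tpoly \<Rightarrow> ((nat list \<Rightarrow>\<^sub>0 nat) \<Rightarrow> nat list) \<Rightarrow> nat list
    \<Rightarrow> (nat list \<Rightarrow> 'a) \<Rightarrow> 'a" where
  "cofactor r u w f = (\<Sum>m\<in>{m\<in>Poly_Mapping.keys r. u m = w}.
     Poly_Mapping.lookup r m * (\<Prod>v\<in>Poly_Mapping.keys m - {w}. f v ^ Poly_Mapping.lookup m v))"

lemma peval_eq_sum_cofactor:
  assumes "\<forall>m\<in>Poly_Mapping.keys r. u m \<in> Poly_Mapping.keys m \<and> Poly_Mapping.lookup m (u m) = 1"
  shows "peval r f = (\<Sum>w\<in>u ` Poly_Mapping.keys r. f w * cofactor r u w f)"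
proof -
  have "(\<Prod>v\<in>Poly_Mapping.keys m. f v ^ Poly_Mapping.lookup m v)
      = f (u m) * (\<Prod>v\<in>Poly_Mapping.keys m - {u m}. f v ^ Poly_Mapping.lookup m v)"
    if "m \<in> Poly_Mapping.keys r" for m
    using prod.remove[OF finite_keys, of "u m" m "\<lambda>v. f v ^ Poly_Mapping.lookup m v"] assms that
    by simp
  then have "peval r f = (\<Sum>m\<in>Poly_Mapping.keys r. Poly_Mapping.lookup r m *
      (f (u m) * (\<Prod>v\<in>Poly_Mapping.keys m - {u m}. f v ^ Poly_Mapping.lookup m v)))"
    unfolding peval_def by simp
  also have "\<dots> = (\<Sum>w\<in>u ` Poly_Mapping.keys r. \<Sum>m\<in>{m\<in>Poly_Mapping.keys r. u m = w}.
      Poly_Mapping.lookup r m * (f (u m) * (\<Prod>v\<in>Poly_Mapping.keys m - {u m}. f v ^ Poly_Mapping.lookup m v)))"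
    by (rule sum.image_gen) simp
  also have "\<dots> = (\<Sum>w\<in>u ` Poly_Mapping.keys r. f w * cofactor r u w f)"
    unfolding cofactor_def sum_distrib_left by (intro sum.cong refl) (auto simp: mult_ac)
  finally show ?thesis .
qed

lemma cofactor_cong:
  assumes "\<And>m v. m \<in> Poly_Mapping.keys r \<Longrightarrow> u m = w \<Longrightarrow> v \<in> Poly_Mapping.keys m - {w} \<Longrightarrow> f v = g v"
  shows "cofactor r u w f = cofactor r u w g"
  unfolding cofactor_def using assms by (auto intro!: sum.cong prod.cong)

definition fill_positions :: "nat \<Rightarrow> nat list \<Rightarrow> (nat \<Rightarrow> nat \<Rightarrow> nat) \<Rightarrow> nat list \<Rightarrow> nat list" where
  "fill_positions a i \<sigma> v = map (\<lambda>j. if v ! j = a then i ! j else \<sigma> j (v ! j)) [0..<length v]"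

lemma fill_positions_cong:
  "\<forall>j\<in>positions a v. i ! j = i' ! j \<Longrightarrow> fill_positions a i \<sigma> v = fill_positions a i' \<sigma> v"
  by (auto simp: fill_positions_def positions_def)

lemma fill_positions_replicate: "fill_positions a i \<sigma> (replicate (length i) a) = i"
  unfolding fill_positions_def by (rule nth_equalityI) simp_all

lemma fill_positions_eq_act_var:
  assumes "a \<notin> set v"
  shows "fill_positions a i \<sigma> v = act_var \<sigma> v"
proof -
  have "v ! j \<noteq> a" if "j < length v" for j
    using assms nth_mem[OF that] by metis
  then show ?thesis
    unfolding fill_positions_def act_var_def by (intro map_cong refl) simp
qed

lemma depends_only_on_fill_positions:
  "length w = d \<Longrightarrow> depends_only_on d (positions p w) (\<lambda>i. F (fill_positions p i \<sigma> w))"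
  unfolding depends_only_on_def
  by (metis (no_types, lifting) fill_positions_cong mem_Collect_eq positions_def)

lemma depends_only_on_cofactor:
  assumes "has_weight_ones d p r" "1 \<le> p"
    and u: "\<And>m. m \<in> Poly_Mapping.keys r \<Longrightarrow> u m \<in> Poly_Mapping.keys m"
  shows "depends_only_on d ({0..<d} - positions p w) (\<lambda>i. cofactor r u w (\<lambda>v. T (fill_positions p i \<sigma> v)))"
  unfolding depends_only_on_def
proof (intro allI impI cofactor_cong arg_cong[where f=T] fill_positions_cong ballI)
  fix i i' :: "nat list" and m v j
  assume agree: "\<forall>j\<in>{0..<d} - positions p w. j < d \<longrightarrow> i ! j = i' ! j"
    and m: "m \<in> Poly_Mapping.keys r" "u m = w" and v: "v \<in> Poly_Mapping.keys m - {w}"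
    and j: "j \<in> positions p v"
  note keys = has_weight_ones_keysD[OF assms(1,2) m(1)]
  have "positions p v \<inter> positions p w = {}"
    using positions_disjoint_if_mweight_eq_1[OF keys(2)] u[OF m(1)] v keys(1) m(2) by auto
  moreover have "j < d" using j keys(1) v positions_subset[of p v] by auto
  ultimately show "i ! j = i' ! j" using agree j by auto
qed

lemma permutation_realising_fill_positions:
  assumes \<sigma>0: "\<forall>j<d. \<sigma>0 j permutes {1..n j}" and i: "i \<in> box d n"
    and p: "1 \<le> p" "\<forall>j<d. p \<le> n j" and generic: "\<forall>j<d. i ! j \<notin> \<sigma>0 j ` {1..<p}"
  shows "\<exists>\<sigma>. (\<forall>j<d. \<sigma> j permutes {1..n j})
    \<and> (\<forall>v. length v = d \<longrightarrow> set v \<subseteq> {1..p} \<longrightarrow> act_var \<sigma> v = fill_positions p i \<sigma>0 v)"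
proof -
  define \<sigma> where "\<sigma> j = transpose (\<sigma>0 j p) (i ! j) \<circ> \<sigma>0 j" for j
  have perm: "\<sigma> j permutes {1..n j}" if j: "j < d" for j
  proof -
    have "\<sigma>0 j p \<in> {1..n j}" "i ! j \<in> {1..n j}"
      using permutes_in_image[OF \<sigma>0[rule_format, OF j]] p j i by (auto simp: box_def)
    then show ?thesis
      unfolding \<sigma>_def using permutes_compose[OF \<sigma>0[rule_format, OF j] permutes_swap_id] by blast
  qed
  have \<sigma>_below: "\<sigma> j x = \<sigma>0 j x" if "j < d" "x \<in> {1..<p}" for j x
  proof -
    have "\<sigma>0 j x \<noteq> \<sigma>0 j p"
      using permutes_inj[OF \<sigma>0[rule_format, OF that(1)]] that(2) by (metis atLeastLessThan_iff injD less_irrefl)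
    moreover have "\<sigma>0 j x \<noteq> i ! j"
      using generic that(1) imageI[OF that(2), of "\<sigma>0 j"] by metis
    ultimately show ?thesis by (simp add: \<sigma>_def transpose_def)
  qed
  have act: "act_var \<sigma> v = fill_positions p i \<sigma>0 v" if v: "length v = d" "set v \<subseteq> {1..p}" for v
  proof -
    have "\<sigma> j (v ! j) = (if v ! j = p then i ! j else \<sigma>0 j (v ! j))" if j: "j < d" for j
    proof (cases "v ! j = p")
      case False
      have "v ! j \<in> {1..p}" using v j nth_mem by blast
      with False have "v ! j \<in> {1..<p}" by simp
      with False show ?thesis using \<sigma>_below j by simp
    next
      case True
      then show ?thesis by (simp add: \<sigma>_def)
    qed
    then show ?thesis
      unfolding act_var_def fill_positions_def v(1) by (intro map_cong refl) simp
  qed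
  show ?thesis
    using perm act by blast
qed

lemma generic_entry_identity:
  fixes h h' r :: "'a::comm_semiring_1 tpoly"
  assumes h: "h = tvar (replicate d p) * h' + r"
    and h': "in_ring d (p - 1) h'" and r: "in_ring d p r"
    and vanish: "\<forall>\<sigma>. (\<forall>j<d. \<sigma> j permutes {1..n j}) \<longrightarrow> peval (act_poly \<sigma> h) T = 0"
    and \<sigma>0: "\<forall>j<d. \<sigma>0 j permutes {1..n j}" and i: "i \<in> box d n"
    and p: "1 \<le> p" "\<forall>j<d. p \<le> n j" and generic: "\<forall>j<d. i ! j \<notin> \<sigma>0 j ` {1..<p}"
  shows "T i * peval h' (\<lambda>v. T (act_var \<sigma>0 v)) + peval r (\<lambda>v. T (fill_positions p i \<sigma>0 v)) = 0"
proof -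
  obtain \<sigma> where perm: "\<forall>j<d. \<sigma> j permutes {1..n j}"
    and act: "\<And>v. length v = d \<Longrightarrow> set v \<subseteq> {1..p} \<Longrightarrow> act_var \<sigma> v = fill_positions p i \<sigma>0 v"
    using permutation_realising_fill_positions[OF \<sigma>0 i p generic] by metis
  have "length i = d" using i by (simp add: box_def)
  then have "act_var \<sigma> (replicate d p) = i"
    using act[of "replicate d p"] p(1) fill_positions_replicate[of p i \<sigma>0] by (simp add: set_replicate_conv_if)
  moreover have "peval h' (\<lambda>v. T (act_var \<sigma> v)) = peval h' (\<lambda>v. T (act_var \<sigma>0 v))"
  proof (rule peval_cong)
    fix v assume "v \<in> tvars h'"
    then have v: "length v = d" "set v \<subseteq> {1..p - 1}" using in_ring_tvarsD[OF h'] by simp_all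
    moreover have "{1..p - 1} \<subseteq> {1..p}" "p \<notin> {1..p - 1}" using p(1) by auto
    ultimately have "p \<notin> set v" "set v \<subseteq> {1..p}" by blast+
    then show "T (act_var \<sigma> v) = T (act_var \<sigma>0 v)"
      using act[OF v(1)] fill_positions_eq_act_var by metis
  qed
  moreover have "peval r (\<lambda>v. T (act_var \<sigma> v)) = peval r (\<lambda>v. T (fill_positions p i \<sigma>0 v))"
    using act in_ring_tvarsD[OF r] by (intro peval_cong) simp
  moreover have "peval (act_poly \<sigma> h) T = 0" using vanish perm by blast
  ultimately show ?thesis by (simp add: peval_act_poly h peval_add peval_tvar_mult)
qed

lemma prk_decomp_generic_part:
  fixes r :: "'a::field tpoly" and T :: "nat list \<Rightarrow> 'a"
  assumes d: "2 \<le> d" and p: "1 \<le> p"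
    and r: "has_weight_ones d p r" "replicate d p \<notin> tvars r" and c: "c \<noteq> 0"
    and identity: "\<And>i. i \<in> box d n \<Longrightarrow> \<forall>j<d. P j (i ! j) \<Longrightarrow>
      T i * c + peval r (\<lambda>v. T (fill_positions p i \<sigma> v)) = 0"
  shows "\<exists>k \<le> (\<Sum>s=1..d div 2. (d choose s) * (p - 1) ^ (d - s)).
    prk_decomp d n TYPE('a) (\<lambda>i. if \<forall>j<d. P j (i ! j) then T i else 0) k"
proof -
  have "0 < d" using d by simp
  obtain u where u: "\<And>m. m \<in> Poly_Mapping.keys r \<Longrightarrow> u m \<in> Poly_Mapping.keys m
      \<and> Poly_Mapping.lookup m (u m) = 1 \<and> card (positions p (u m)) \<in> {1..d div 2}"
    using has_weight_ones_choose_variables[OF \<open>0 < d\<close> p r] by blast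
  define V where "V = u ` Poly_Mapping.keys r"
  have V: "length w = d \<and> set w \<subseteq> {1..p} \<and> card (positions p w) \<in> {1..d div 2}" if w: "w \<in> V" for w
  proof -
    obtain m where m: "m \<in> Poly_Mapping.keys r" "w = u m" using w unfolding V_def by blast
    then show ?thesis using u[OF m(1)] has_weight_ones_keysD(1)[OF r(1) p m(1)] by simp
  qed
  define B where "B w i = cofactor r u w (\<lambda>v. T (fill_positions p i \<sigma> v))" for w i
  have "prk_decomp d n TYPE('a) (\<lambda>i. if \<forall>j<d. P j (i ! j) then T i else 0) (card V)"
  proof (rule prk_decomp_restricted_sum[where S="positions p" and B=B])
    show "finite V" by (simp add: V_def)
  next
    fix w assume "w \<in> V"
    then have "positions p w \<subseteq> {0..<d}" "card (positions p w) \<in> {1..d div 2}"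
      using V positions_subset[of p w] by auto
    moreover have "d div 2 < card {0..<d}" using d by simp
    ultimately show "positions p w \<noteq> {} \<and> positions p w \<subset> {0..<d}" by auto
  next
    fix w assume "w \<in> V"
    then show "depends_only_on d (positions p w) (\<lambda>i. - T (fill_positions p i \<sigma> w) / c)"
      by (intro depends_only_on_fill_positions) (simp add: V)
  next
    fix w
    show "depends_only_on d ({0..<d} - positions p w) (B w)"
      unfolding B_def by (rule depends_only_on_cofactor[OF r(1) p]) (simp add: u)
  next
    fix i assume i: "i \<in> box d n" "\<forall>j<d. P j (i ! j)"
    have "T i = - peval r (\<lambda>v. T (fill_positions p i \<sigma> v)) / c"
      using identity[OF i] c by (simp add: eq_neg_iff_add_eq_0 field_simps)
    also have "\<dots> = - (\<Sum>w\<in>V. T (fill_positions p i \<sigma> w) * B w i) / c"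
      using u by (subst peval_eq_sum_cofactor[of r u]) (auto simp: V_def B_def)
    finally show "T i = (\<Sum>w\<in>V. - T (fill_positions p i \<sigma> w) / c * B w i)"
      by (simp add: sum_divide_distrib sum_negf)
  qed
  moreover have "card V \<le> (\<Sum>s=1..d div 2. (d choose s) * (p - 1) ^ (d - s))"
    using card_le_sum_words_with_count[OF p] V by blast
  ultimately show ?thesis by blast
qed

theorem proposition2:
  fixes d p :: nat and n :: "nat \<Rightarrow> nat"
    and h h' r' :: "'a::field tpoly" and T :: "nat list \<Rightarrow> 'a"
  assumes "d \<ge> 2" and "p \<ge> 1"
    and "in_ring d p h"
    and "h = tvar (replicate d p) * h' + r'"
    and "has_weight_ones d (p - 1) h'"
    and "has_weight_ones d p r'"
    and "replicate d p \<notin> tvars r'"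
    and "\<forall>j<d. n j \<ge> p"
    and "\<forall>\<sigma>. (\<forall>j<d. \<sigma> j permutes {1..n j}) \<longrightarrow> peval (act_poly \<sigma> h) T = 0"
    and "\<exists>\<sigma>. (\<forall>j<d. \<sigma> j permutes {1..n j}) \<and> peval (act_poly \<sigma> h') T \<noteq> 0"
  shows "prk d n T \<le> d * (p - 1) + (\<Sum>s=1..d div 2. (d choose s) * (p - 1) ^ (d - s))"
proof -
  obtain \<sigma>0 where \<sigma>0: "\<forall>j<d. \<sigma>0 j permutes {1..n j}" and "peval (act_poly \<sigma>0 h') T \<noteq> 0"
    using assms(10) by blast
  then have c: "peval h' (\<lambda>v. T (act_var \<sigma>0 v)) \<noteq> 0" by (simp add: peval_act_poly)
  define E where "E j = \<sigma>0 j ` {1..<p}" for j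
  have "\<exists>k \<le> (\<Sum>s=1..d div 2. (d choose s) * (p - 1) ^ (d - s)).
      prk_decomp d n TYPE('a) (\<lambda>i. if \<forall>j<d. i ! j \<notin> E j then T i else 0) k"
    using assms(1,2,6,7) c
  proof (rule prk_decomp_generic_part)
    fix i assume "i \<in> box d n" "\<forall>j<d. i ! j \<notin> E j"
    then show "T i * peval h' (\<lambda>v. T (act_var \<sigma>0 v)) + peval r' (\<lambda>v. T (fill_positions p i \<sigma>0 v)) = 0"
      using generic_entry_identity[OF assms(4) _ _ assms(9) \<sigma>0] assms(2,5,6,8)
      by (simp add: E_def has_weight_ones_def)
  qed
  then obtain k where k: "k \<le> (\<Sum>s=1..d div 2. (d choose s) * (p - 1) ^ (d - s))"
    and generic: "prk_decomp d n TYPE('a) (\<lambda>i. if \<forall>j<d. i ! j \<notin> E j then T i else 0) k"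
    by blast
  have "card (E j) = p - 1" if "j < d" for j
    unfolding E_def using permutes_inj[OF \<sigma>0[rule_format, OF that]]
    by (simp add: card_image inj_on_subset)
  then have "(\<Sum>j<d. card (E j)) = d * (p - 1)" by simp
  then have special: "prk_decomp d n TYPE('a) (\<lambda>i. if \<exists>j<d. i ! j \<in> E j then T i else 0) (d * (p - 1))"
    using prk_decomp_special_slices[OF assms(1), of E n T] by (simp add: E_def)
  have "(\<lambda>i. (if \<exists>j<d. i ! j \<in> E j then T i else 0) + (if \<forall>j<d. i ! j \<notin> E j then T i else 0)) = T"
    by (rule ext) auto
  then have "prk_decomp d n TYPE('a) T (d * (p - 1) + k)"
    using prk_decomp_add[OF special generic] by simp
  then have "prk d n T \<le> d * (p - 1) + k"
    unfolding prk_def by (rule Least_le)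
  with k show ?thesis by linarith
qed

end
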